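(* Let $V$ be a vector configuration of rank $r$. For every $s$ with $1\le s\le r-1$ there exists a subconfiguration $W\subseteq V$ of rank $s$ such that $\mathrm{DD}(V)=\mathrm{DD}(W)+\mathrm{DD}(V/W)$.
   Context: A vector configuration is a finite family (repetitions allowed) $U$ of vectors in a real vector space $E$; a subconfiguration is a subfamily, $\operatorname{rank}(U)=\dim\operatorname{lin}(U)$, cardinalities count multiplicities. The quotient $V/W$ is the configuration in $E/\operatorname{lin}(W)$ of the images of the elements of $V\setminus W$. Covector discrepancy: $\mathrm{DD}(U)=\max_f\big|\,|\{u\in U: f(u)>0\}|-|\{u\in U:f(u)<0\}|\,\big|$ over all linear functionals $f$ on $E$. *)

theory Defs
  imports "HOL-Analysis.Analysis"
begin

text \<open>A vector configuration is a finite index set I together with a map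
  v :: 'i => 'a into a real vector space (repetitions allowed since v need
  not be injective).  A subconfiguration is given by a subset J of I.\<close>

definition rank_conf :: "('i \<Rightarrow> 'a::real_vector) \<Rightarrow> 'i set \<Rightarrow> nat" where
  "rank_conf v I = dim (span (v ` I))"

definition imbalance :: "('a \<Rightarrow> real) \<Rightarrow> ('i \<Rightarrow> 'a) \<Rightarrow> 'i set \<Rightarrow> nat" where
  "imbalance f v I = nat \<bar>int (card {i\<in>I. f (v i) > 0}) - int (card {i\<in>I. f (v i) < 0})\<bar>"

definition DD :: "('i \<Rightarrow> 'a::real_vector) \<Rightarrow> 'i set \<Rightarrow> nat" where
  "DD v I = Max {imbalance f v I | f. linear f}"

text \<open>Covector discrepancy of the quotient V/W, where V = (v, I), W = (v, J):
  the configuration of images of the elements of I - J in E / lin(W).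
  Linear functionals on E / lin(W) are exactly the linear functionals on E
  vanishing on lin(W) (composition with the canonical projection), and the
  sign of such a functional on the image of v i is the sign of f (v i).\<close>
definition DD_quot :: "('i \<Rightarrow> 'a::real_vector) \<Rightarrow> 'i set \<Rightarrow> 'i set \<Rightarrow> nat" where
  "DD_quot v I J = Max {imbalance f v (I - J) | f. linear f \<and> (\<forall>w\<in>span (v ` J). f w = 0)}"

end

theory Submission
  imports Defs
begin

text \<open>Take a maximiser \<open>f\<close> of the imbalance that is generic, i.e. nonzero on every nonzero
  vector of \<open>V\<close>.  Walking up the face lattice below the covector of \<open>f\<close> one rank at a time
  gives a functional \<open>g\<close> whose covector is a face of that of \<open>f\<close> and whose zero set \<open>W\<close>
  is a flat of rank exactly \<open>s\<close>.  On \<open>W\<close> the functional \<open>f\<close> contributes at most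
  \<open>DD(W)\<close>; off \<open>W\<close> it has the signs of \<open>g\<close>, which vanishes on \<open>lin(W)\<close>, so it contributes
  at most \<open>DD(V/W)\<close>.  Conversely, a generic maximiser for \<open>V/W\<close> perturbed by a small multiple
  of a maximiser for \<open>W\<close> has imbalance \<open>DD(W) + DD(V/W)\<close>, which is at most \<open>DD(V)\<close>.\<close>

section \<open>Annihilators of subspaces\<close>

definition annihilator :: "'a::real_vector set \<Rightarrow> ('a \<Rightarrow> real) set" where
  "annihilator S = {f. linear f \<and> (\<forall>w\<in>span S. f w = 0)}"

lemma annihilator_empty: "annihilator {} = {f. linear f}"
  by (auto simp: annihilator_def linear_0)

lemma annihilator_add_scaled:
  assumes "f \<in> annihilator S" "h \<in> annihilator S"
  shows "(\<lambda>y. f y + c * h y) \<in> annihilator S"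
proof -
  have "linear (\<lambda>y. c * h y)"
    using assms(2) linear_compose_scale_right[of h c] by (simp add: annihilator_def)
  then show ?thesis
    using assms by (simp add: annihilator_def linear_compose_add)
qed

lemma annihilator_uminus: "f \<in> annihilator S \<Longrightarrow> (\<lambda>y. - f y) \<in> annihilator S"
  by (auto simp: annihilator_def intro: linear_compose_neg)

lemma annihilator_vanishes: "f \<in> annihilator S \<Longrightarrow> x \<in> S \<Longrightarrow> f x = 0"
  by (auto simp: annihilator_def intro: span_base)

lemma linear_in_annihilator:
  assumes "linear f" "\<And>x. x \<in> S \<Longrightarrow> f x = 0"
  shows "f \<in> annihilator S"
  unfolding annihilator_def using assms linear_eq_0_on_span by blast

lemma exists_annihilator_value:
  fixes x :: "'a::real_vector"
  assumes "x \<notin> span T"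
  shows "\<exists>\<psi>\<in>annihilator T. \<psi> x = c"
proof -
  obtain B where B: "B \<subseteq> T" "independent B" "T \<subseteq> span B"
    by (rule maximal_independent_subset)
  have "span T = span B"
    using B span_mono[OF B(1)] span_minimal[OF B(3) subspace_span] by auto
  with assms have "x \<notin> span B" by simp
  then have "independent (insert x B)"
    using B(2) span_base[of x B] by (auto simp: independent_insert)
  from linear_independent_extend[OF this, of "\<lambda>z. if z = x then c else 0"]
  obtain \<psi> :: "'a \<Rightarrow> real" where \<psi>: "linear \<psi>" "\<forall>z\<in>insert x B. \<psi> z = (if z = x then c else 0)"
    by blast
  have "\<psi> \<in> annihilator B"
    using \<psi> \<open>x \<notin> span B\<close> by (intro linear_in_annihilator) (auto dest: span_base)
  then show ?thesis
    using \<psi>(2) \<open>span T = span B\<close> by (auto simp: annihilator_def)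
qed

lemma dim_le_dim_if_subset_span:
  fixes V W :: "'a::real_vector set"
  assumes "finite W" "V \<subseteq> span W"
  shows "dim V \<le> dim W"
proof -
  obtain B where B: "B \<subseteq> W" "independent B" "W \<subseteq> span B" "card B = dim W"
    by (rule basis_exists)
  have "V \<subseteq> span B"
    using assms(2) span_minimal[OF B(3) subspace_span] by blast
  then have "dim V \<le> card B"
    using finite_subset[OF B(1) assms(1)] by (rule dim_le_card)
  with B(4) show ?thesis by simp
qed

lemma dim_insert_not_in_span:
  fixes S :: "'a::real_vector set"
  assumes "finite S" "x \<notin> span S"
  shows "dim (insert x S) = dim S + 1"
proof -
  obtain B where B: "B \<subseteq> S" "independent B" "S \<subseteq> span B" "card B = dim S"
    by (rule basis_exists)
  have "x \<notin> span B"
    using assms(2) span_mono[OF B(1)] by blast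
  then have "independent (insert x B)" "x \<notin> B"
    using B(2) span_base by (auto simp: independent_insert)
  moreover have "insert x S \<subseteq> span (insert x B)"
    using B(3) span_mono[of B "insert x B"] span_base[of x "insert x B"] by blast
  ultimately show ?thesis
    using B(1,4) finite_subset[OF B(1) assms(1)]
    by (intro dim_unique[of "insert x B"]) auto
qed

lemma dim_empty_real_vector: "dim ({} :: 'a::real_vector set) = 0"
  using dim_eq_card_independent[OF independent_empty] by simp

section \<open>Sign sums and discrepancy modulo a subspace\<close>

definition sign_sum :: "('a \<Rightarrow> real) \<Rightarrow> ('i \<Rightarrow> 'a) \<Rightarrow> 'i set \<Rightarrow> real" where
  "sign_sum f v A = (\<Sum>i\<in>A. sgn (f (v i)))"

definition zero_set :: "('a \<Rightarrow> real) \<Rightarrow> ('i \<Rightarrow> 'a) \<Rightarrow> 'i set \<Rightarrow> 'i set" where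
  "zero_set f v A = {i\<in>A. f (v i) = 0}"

text \<open>The covector discrepancy of the image of \<open>(v, A)\<close> in \<open>E / lin S\<close>.\<close>
definition DD_modulo :: "('i \<Rightarrow> 'a::real_vector) \<Rightarrow> 'i set \<Rightarrow> 'a set \<Rightarrow> nat" where
  "DD_modulo v A S = Max ((\<lambda>f. imbalance f v A) ` annihilator S)"

lemma DD_eq_DD_modulo: "DD v I = DD_modulo v I {}"
  unfolding DD_def DD_modulo_def annihilator_empty by (simp add: setcompr_eq_image)

lemma DD_quot_eq_DD_modulo: "DD_quot v I J = DD_modulo v (I - J) (v ` J)"
  unfolding DD_quot_def DD_modulo_def annihilator_def by (simp add: setcompr_eq_image)

lemma imbalance_eq_abs_sign_sum:
  assumes "finite A"
  shows "real (imbalance f v A) = \<bar>sign_sum f v A\<bar>"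
proof -
  have "sign_sum f v A = (\<Sum>i\<in>A. (if f (v i) > 0 then 1 else 0) - (if f (v i) < 0 then 1 else 0))"
    unfolding sign_sum_def by (intro sum.cong) (auto simp: sgn_real_def)
  also have "\<dots> = real (card {i\<in>A. f (v i) > 0}) - real (card {i\<in>A. f (v i) < 0})"
    using assms by (simp add: sum_subtractf sum.inter_filter[OF assms, symmetric])
  finally show ?thesis
    by (simp add: imbalance_def)
qed

lemma imbalance_le_card: "finite A \<Longrightarrow> imbalance f v A \<le> card A"
  using card_mono[of A "{i\<in>A. f (v i) > 0}"] card_mono[of A "{i\<in>A. f (v i) < 0}"]
  unfolding imbalance_def by auto

lemma finite_imbalances: "finite A \<Longrightarrow> finite ((\<lambda>f. imbalance f v A) ` F)"
  by (rule finite_subset[of _ "{..card A}"]) (auto simp: imbalance_le_card)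

lemma abs_sign_sum_le_DD_modulo:
  assumes "finite A" "f \<in> annihilator S"
  shows "\<bar>sign_sum f v A\<bar> \<le> DD_modulo v A S"
proof -
  have "imbalance f v A \<le> DD_modulo v A S"
    unfolding DD_modulo_def using assms by (intro Max_ge finite_imbalances) auto
  then show ?thesis
    using imbalance_eq_abs_sign_sum[OF assms(1), of f v] by linarith
qed

lemma sign_sum_uminus: "sign_sum (\<lambda>y. - f y) v A = - sign_sum f v A"
  by (simp add: sign_sum_def sgn_minus sum_negf)

lemma DD_modulo_attained:
  assumes "finite A"
  shows "\<exists>f\<in>annihilator S. sign_sum f v A = DD_modulo v A S"
proof -
  have "(\<lambda>_. 0) \<in> annihilator S"
    by (simp add: annihilator_def linear_zero)
  then have "(\<lambda>f. imbalance f v A) ` annihilator S \<noteq> {}"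
    by blast
  then have "DD_modulo v A S \<in> (\<lambda>f. imbalance f v A) ` annihilator S"
    unfolding DD_modulo_def by (rule Max_in[OF finite_imbalances[OF assms]])
  then obtain f where f: "DD_modulo v A S = imbalance f v A" "f \<in> annihilator S"
    by (rule imageE)
  then have abs: "\<bar>sign_sum f v A\<bar> = DD_modulo v A S"
    using imbalance_eq_abs_sign_sum[OF assms, of f v] by simp
  show ?thesis
  proof (cases "sign_sum f v A \<ge> 0")
    case True
    with abs have "sign_sum f v A = DD_modulo v A S"
      by simp
    with f(2) show ?thesis by blast
  next
    case False
    with abs have "sign_sum (\<lambda>y. - f y) v A = DD_modulo v A S"
      by (simp add: sign_sum_uminus)
    with annihilator_uminus[OF f(2)] show ?thesis by blast
  qed
qed

lemma sign_sum_split: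
  assumes "finite A" "B \<subseteq> A"
  shows "sign_sum f v A = sign_sum f v B + sign_sum f v (A - B)"
  unfolding sign_sum_def using sum.subset_diff[OF assms(2,1)] by (simp add: add.commute)

lemma sign_sum_cong:
  "(\<And>i. i \<in> A \<Longrightarrow> sgn (f (v i)) = sgn (g (v i))) \<Longrightarrow> sign_sum f v A = sign_sum g v A"
  unfolding sign_sum_def by (rule sum.cong) auto

section \<open>Composition of covectors by perturbation\<close>

lemma sgn_add_eq_sgn: "\<bar>c\<bar> < \<bar>a\<bar> \<Longrightarrow> sgn (a + c) = sgn (a::real)"
  by (auto simp: sgn_real_def)

lemma small_perturbation:
  fixes a b :: "'i \<Rightarrow> real"
  assumes "finite A"
  shows "\<exists>\<epsilon>>0. \<forall>x\<in>A. sgn (a x + \<epsilon> * b x) = (if a x = 0 then sgn (b x) else sgn (a x))"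
proof -
  have "\<forall>\<^sub>F \<epsilon> in at_right 0. sgn (a x + \<epsilon> * b x) = (if a x = 0 then sgn (b x) else sgn (a x))"
    for x
  proof (cases "a x = 0")
    case True
    show ?thesis
      using eventually_at_right_less[of "0::real"] by eventually_elim (simp add: True sgn_mult)
  next
    case False
    have "((\<lambda>\<epsilon>. \<bar>\<epsilon> * b x\<bar>) \<longlongrightarrow> 0) (at_right 0)"
      by (intro tendsto_eq_intros) auto
    then have "\<forall>\<^sub>F \<epsilon> in at_right 0. \<bar>\<epsilon> * b x\<bar> < \<bar>a x\<bar>"
      using False by (intro order_tendstoD(2)) auto
    then show ?thesis
      by eventually_elim (simp add: False sgn_add_eq_sgn)
  qed
  then have "\<forall>\<^sub>F \<epsilon> in at_right 0. \<epsilon> > 0 \<and>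
      (\<forall>x\<in>A. sgn (a x + \<epsilon> * b x) = (if a x = 0 then sgn (b x) else sgn (a x)))"
    using assms by (intro eventually_conj eventually_ball_finite eventually_at_right_less) auto
  then obtain \<epsilon> where "\<epsilon> > 0 \<and>
      (\<forall>x\<in>A. sgn (a x + \<epsilon> * b x) = (if a x = 0 then sgn (b x) else sgn (a x)))"
    using eventually_happens[of _ "at_right (0::real)"] by auto
  then show ?thesis by blast
qed

text \<open>The covector of \<open>F\<close> is the composition of the covectors of \<open>f\<close> and \<open>h\<close>
  in the sense of oriented matroids.\<close>
definition composes ::
    "('a \<Rightarrow> real) \<Rightarrow> ('a \<Rightarrow> real) \<Rightarrow> ('a \<Rightarrow> real) \<Rightarrow> ('i \<Rightarrow> 'a) \<Rightarrow> 'i set \<Rightarrow> bool" where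
  "composes F f h v A \<longleftrightarrow>
    (\<forall>i\<in>A. sgn (F (v i)) = (if f (v i) = 0 then sgn (h (v i)) else sgn (f (v i))))"

lemma exists_composition:
  assumes "finite A" "f \<in> annihilator S" "h \<in> annihilator S"
  shows "\<exists>F\<in>annihilator S. composes F f h v A"
proof -
  obtain \<epsilon> where "\<forall>i\<in>A. sgn (f (v i) + \<epsilon> * h (v i)) =
      (if f (v i) = 0 then sgn (h (v i)) else sgn (f (v i)))"
    using small_perturbation[OF assms(1), of "\<lambda>i. f (v i)" "\<lambda>i. h (v i)"] by blast
  then show ?thesis
    using annihilator_add_scaled[OF assms(2,3), of \<epsilon>] unfolding composes_def
    by (intro bexI[of _ "\<lambda>y. f y + \<epsilon> * h y"]) simp_all
qed

lemma sign_sum_composes: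
  assumes "finite A" "composes F f h v A"
  shows "sign_sum F v A = sign_sum f v A + sign_sum h v (zero_set f v A)"
proof -
  have "sign_sum F v A = (\<Sum>i\<in>A. sgn (f (v i)) + (if f (v i) = 0 then sgn (h (v i)) else 0))"
    using assms(2) unfolding sign_sum_def composes_def by (intro sum.cong) auto
  also have "\<dots> = sign_sum f v A + sign_sum h v (zero_set f v A)"
    unfolding sign_sum_def zero_set_def by (simp add: sum.distrib sum.inter_filter[OF assms(1)])
  finally show ?thesis .
qed

lemma zero_set_composes:
  assumes "composes F f h v A"
  shows "zero_set F v A = zero_set h v (zero_set f v A)"
proof -
  have "F (v i) = 0 \<longleftrightarrow> f (v i) = 0 \<and> h (v i) = 0" if "i \<in> A" for i
    using assms that unfolding composes_def by (metis sgn_eq_0_iff)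
  then show ?thesis
    unfolding zero_set_def by auto
qed

lemma exists_annihilator_nonzero_on:
  assumes "finite A" "\<forall>i\<in>A. v i \<notin> span S"
  shows "\<exists>k\<in>annihilator S. \<forall>i\<in>A. k (v i) \<noteq> 0"
  using assms
proof (induction A rule: finite_induct)
  case empty
  have "(\<lambda>_. 0) \<in> annihilator S"
    by (simp add: annihilator_def linear_zero)
  then show ?case by blast
next
  case (insert j A)
  then obtain k where k: "k \<in> annihilator S" "\<forall>i\<in>A. k (v i) \<noteq> 0"
    by auto
  obtain \<psi> where \<psi>: "\<psi> \<in> annihilator S" "\<psi> (v j) = 1"
    using exists_annihilator_value insert.prems by blast
  obtain F where F: "F \<in> annihilator S" "composes F k \<psi> v (insert j A)"
    using exists_composition[OF _ k(1) \<psi>(1)] insert.hyps(1) by blast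
  have "sgn (F (v i)) \<noteq> 0" if "i \<in> insert j A" for i
    using F(2) k(2) \<psi>(2) that unfolding composes_def by (auto simp: sgn_eq_0_iff split: if_splits)
  then have "\<forall>i\<in>insert j A. F (v i) \<noteq> 0"
    by force
  with F(1) show ?case
    by blast
qed

text \<open>Perturbing a maximiser towards \<open>k\<close> or towards \<open>-k\<close> cannot increase the sign sum,
  so \<open>k\<close> is balanced on the zero set of the maximiser and the perturbation towards \<open>k\<close> is
  again a maximiser.\<close>
lemma DD_modulo_attained_generic:
  assumes "finite A"
  shows "\<exists>f\<in>annihilator S. sign_sum f v A = DD_modulo v A S \<and>
    (\<forall>i\<in>A. v i \<notin> span S \<longrightarrow> f (v i) \<noteq> 0)"
proof -
  obtain q where q: "q \<in> annihilator S" "sign_sum q v A = DD_modulo v A S"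
    using DD_modulo_attained[OF assms] by blast
  have "\<exists>k\<in>annihilator S. \<forall>i\<in>{i\<in>A. v i \<notin> span S}. k (v i) \<noteq> 0"
    using assms by (intro exists_annihilator_nonzero_on) auto
  then obtain k where k: "k \<in> annihilator S" "\<forall>i\<in>{i\<in>A. v i \<notin> span S}. k (v i) \<noteq> 0"
    by (rule bexE)
  obtain F where F: "F \<in> annihilator S" "composes F q k v A"
    using exists_composition[OF assms q(1) k(1)] by blast
  obtain G where G: "G \<in> annihilator S" "composes G q (\<lambda>y. - k y) v A"
    using exists_composition[OF assms q(1) annihilator_uminus[OF k(1)]] by blast
  have "sign_sum F v A = DD_modulo v A S + sign_sum k v (zero_set q v A)"
    using sign_sum_composes[OF assms F(2)] q(2) by simp
  moreover have "sign_sum G v A = DD_modulo v A S - sign_sum k v (zero_set q v A)"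
    using sign_sum_composes[OF assms G(2)] q(2) by (simp add: sign_sum_uminus)
  moreover have "\<bar>sign_sum F v A\<bar> \<le> DD_modulo v A S" "\<bar>sign_sum G v A\<bar> \<le> DD_modulo v A S"
    using abs_sign_sum_le_DD_modulo[OF assms] F(1) G(1) by auto
  ultimately have "sign_sum F v A = DD_modulo v A S"
    by linarith
  moreover have "F (v i) \<noteq> 0" if "i \<in> A" "v i \<notin> span S" for i
  proof -
    have "sgn (F (v i)) \<noteq> 0"
      using F(2) k(2) that unfolding composes_def by (auto simp: sgn_eq_0_iff split: if_splits)
    then show ?thesis by auto
  qed
  ultimately show ?thesis
    using F(1) by blast
qed

section \<open>Faces of covectors\<close>

definition covector_le :: "('a \<Rightarrow> real) \<Rightarrow> ('a \<Rightarrow> real) \<Rightarrow> ('i \<Rightarrow> 'a) \<Rightarrow> 'i set \<Rightarrow> bool" where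
  "covector_le g f v A \<longleftrightarrow> (\<forall>i\<in>A. g (v i) \<noteq> 0 \<longrightarrow> sgn (g (v i)) = sgn (f (v i)))"

lemma covector_le_refl: "covector_le f f v A"
  by (simp add: covector_le_def)

lemma covector_le_trans:
  "covector_le h g v A \<Longrightarrow> covector_le g f v A \<Longrightarrow> covector_le h f v A"
  unfolding covector_le_def by (metis sgn_eq_0_iff)

lemma covector_le_composes:
  assumes "composes F f h v A" "covector_le f g v A" "covector_le h g v (zero_set f v A)"
  shows "covector_le F g v A"
  unfolding covector_le_def
proof (intro ballI impI)
  fix i
  assume i: "i \<in> A" "F (v i) \<noteq> 0"
  show "sgn (F (v i)) = sgn (g (v i))"
  proof (cases "f (v i) = 0")
    case True
    then have "sgn (F (v i)) = sgn (h (v i))"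
      using assms(1) i(1) by (simp add: composes_def)
    moreover from this have "h (v i) \<noteq> 0"
      using i(2) by (metis sgn_0_0 sgn_zero)
    ultimately show ?thesis
      using assms(3) i(1) True by (simp add: covector_le_def zero_set_def)
  next
    case False
    then show ?thesis
      using assms(1,2) i by (simp add: composes_def covector_le_def)
  qed
qed

lemma mult_neg_if_sgn_ne:
  fixes a b :: real
  assumes "a \<noteq> 0" "b \<noteq> 0" "sgn a \<noteq> sgn b"
  shows "a * b < 0"
  using assms by (auto simp: sgn_real_def mult_less_0_iff split: if_splits)

lemma ratio_less_if_sign_change:
  fixes a b t :: real
  assumes "t > 0" "a * (a - t * b) < 0"
  shows "0 < a * b" "a / b < t"
proof -
  have "a * a < t * (a * b)"
    using assms(2) by (simp add: algebra_simps)
  then have "0 < t * (a * b)"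
    using zero_le_square[of a] by linarith
  then show ab: "0 < a * b"
    using assms(1) by (simp add: zero_less_mult_iff)
  then have "a / b = (a * a) / (a * b)"
    by simp
  also have "\<dots> < t"
    using \<open>a * a < t * (a * b)\<close> by (rule pos_divide_less_eq[OF ab, THEN iffD2])
  finally show "a / b < t" .
qed

text \<open>Move from \<open>g\<close> along the line \<open>g - t \<psi>\<close> and stop at the first \<open>t > 0\<close> at which a new
  vector enters the zero set; before that no sign can flip.\<close>
lemma exists_line_search_face:
  fixes g \<psi> :: "'a::real_vector \<Rightarrow> real"
  assumes "finite X" "linear g" "linear \<psi>" "\<forall>i\<in>zero_set g v X. \<psi> (v i) = 0"
    and "u \<in> X" "0 < g (v u) * \<psi> (v u)"
  obtains \<phi> x0 where "linear \<phi>" "\<And>y. \<psi> y = 0 \<Longrightarrow> \<phi> y = g y" "covector_le \<phi> g v X"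
    "zero_set g v X \<subseteq> zero_set \<phi> v X" "x0 \<in> X" "g (v x0) \<noteq> 0" "\<phi> (v x0) = 0"
proof -
  define R where "R = (\<lambda>x. g (v x) / \<psi> (v x)) ` {x\<in>X. 0 < g (v x) * \<psi> (v x)}"
  define t where "t = Min R"
  have "finite R" "R \<noteq> {}"
    using assms(1,5,6) by (auto simp: R_def)
  then have "t \<in> R" and t_le: "\<And>r. r \<in> R \<Longrightarrow> t \<le> r"
    by (simp_all add: t_def)
  from \<open>t \<in> R\<close> obtain x0 where x0: "t = g (v x0) / \<psi> (v x0)" "x0 \<in> X" "0 < g (v x0) * \<psi> (v x0)"
    unfolding R_def by auto
  have "t > 0"
    using x0 by (simp add: zero_less_divide_iff zero_less_mult_iff)
  define \<phi> where "\<phi> y = g y - t * \<psi> y" for y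
  have "linear (\<lambda>y. t * \<psi> y)"
    using linear_compose_scale_right[OF assms(3), of t] by simp
  then have "linear \<phi>"
    unfolding \<phi>_def using assms(2) by (rule linear_compose_sub[rotated])
  have "zero_set g v X \<subseteq> zero_set \<phi> v X"
    using assms(4) by (auto simp: zero_set_def \<phi>_def)
  have "\<psi> (v x0) \<noteq> 0" "g (v x0) \<noteq> 0"
    using x0(3) by auto
  then have "\<phi> (v x0) = 0"
    by (simp add: \<phi>_def x0(1))
  have "covector_le \<phi> g v X"
    unfolding covector_le_def
  proof (intro ballI impI)
    fix x
    assume x: "x \<in> X" "\<phi> (v x) \<noteq> 0"
    have "g (v x) \<noteq> 0"
    proof
      assume "g (v x) = 0"
      then have "\<psi> (v x) = 0"
        using assms(4) x(1) by (simp add: zero_set_def)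
      with \<open>g (v x) = 0\<close> x(2) show False
        by (simp add: \<phi>_def)
    qed
    show "sgn (\<phi> (v x)) = sgn (g (v x))"
    proof (rule ccontr)
      assume "sgn (\<phi> (v x)) \<noteq> sgn (g (v x))"
      then have "g (v x) * (g (v x) - t * \<psi> (v x)) < 0"
        using mult_neg_if_sgn_ne[OF \<open>g (v x) \<noteq> 0\<close> x(2)] by (simp add: \<phi>_def)
      from ratio_less_if_sign_change[OF \<open>t > 0\<close> this]
      have "g (v x) / \<psi> (v x) \<in> R" "g (v x) / \<psi> (v x) < t"
        using x(1) by (auto simp: R_def)
      with t_le show False
        by fastforce
    qed
  qed
  show ?thesis
    by (rule that[of \<phi> x0]) (use \<open>linear \<phi>\<close> \<open>covector_le \<phi> g v X\<close>
        \<open>zero_set g v X \<subseteq> zero_set \<phi> v X\<close> x0(2) \<open>g (v x0) \<noteq> 0\<close> \<open>\<phi> (v x0) = 0\<close>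
        in \<open>simp_all add: \<phi>_def\<close>)
qed

lemma annihilator_zero_set: "linear g \<Longrightarrow> g \<in> annihilator (v ` zero_set g v A)"
  by (rule linear_in_annihilator) (auto simp: zero_set_def)

lemma not_in_span_zero_set:
  assumes "linear g" "g x \<noteq> 0"
  shows "x \<notin> span (v ` zero_set g v A)"
  using annihilator_zero_set[OF assms(1), of v A] assms(2) by (auto simp: annihilator_def)

lemma rank_conf_zero_set_eq_0:
  fixes v :: "'i \<Rightarrow> 'a::real_vector"
  assumes "\<forall>i\<in>A. v i \<noteq> 0 \<longrightarrow> f (v i) \<noteq> 0"
  shows "rank_conf v (zero_set f v A) = 0"
proof -
  have "v ` zero_set f v A \<subseteq> span {}"
    using assms by (auto simp: zero_set_def)
  then have "dim (v ` zero_set f v A) \<le> dim ({} :: 'a set)"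
    by (rule dim_le_dim_if_subset_span[rotated]) simp
  then show ?thesis
    by (simp add: rank_conf_def dim_empty_real_vector)
qed

lemma exists_not_in_span:
  fixes v :: "'i \<Rightarrow> 'a::real_vector"
  assumes "finite S" "dim S < rank_conf v X"
  obtains x where "x \<in> X" "v x \<notin> span S"
proof -
  have "\<not> v ` X \<subseteq> span S"
  proof
    assume "v ` X \<subseteq> span S"
    then have "dim (v ` X) \<le> dim S"
      by (rule dim_le_dim_if_subset_span[OF assms(1)])
    with assms(2) show False
      by (simp add: rank_conf_def)
  qed
  then show ?thesis
    using that by blast
qed

lemma rank_conf_less:
  fixes v :: "'i \<Rightarrow> 'a::real_vector"
  assumes "finite Y" "Z \<subseteq> Y" "x \<in> Y" "v x \<notin> span (v ` Z)"
  shows "rank_conf v Z < rank_conf v Y"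
proof -
  have "finite (v ` Z)"
    using assms(1,2) finite_subset by blast
  then have "rank_conf v Z + 1 = dim (insert (v x) (v ` Z))"
    using dim_insert_not_in_span[OF _ assms(4)] by (simp add: rank_conf_def)
  also have "\<dots> \<le> rank_conf v Y"
    using assms(1-3) span_superset[of "v ` Y"]
    by (auto simp: rank_conf_def intro!: dim_le_dim_if_subset_span)
  finally show ?thesis
    by simp
qed

text \<open>Two vectors \<open>u\<close>, \<open>u2\<close> independent modulo the zero set of \<open>g\<close> give a line search
  direction \<open>\<psi>\<close> that vanishes at \<open>u2\<close>, so \<open>u2\<close> stays outside the new zero set.\<close>
lemma exists_intermediate_face:
  fixes v :: "'i \<Rightarrow> 'a::real_vector"
  assumes "finite X" "linear g" "rank_conf v (zero_set g v X) + 2 \<le> rank_conf v X"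
  obtains \<phi> where "linear \<phi>" "covector_le \<phi> g v X" "zero_set g v X \<subseteq> zero_set \<phi> v X"
    "zero_set \<phi> v X \<subset> X" "rank_conf v (zero_set g v X) < rank_conf v (zero_set \<phi> v X)"
proof -
  define Z where "Z = zero_set g v X"
  have "finite (v ` Z)"
    using assms(1) by (simp add: Z_def zero_set_def)
  have "dim (v ` Z) < rank_conf v X"
    using assms(3) by (simp add: Z_def rank_conf_def)
  then obtain u where u: "u \<in> X" "v u \<notin> span (v ` Z)"
    by (rule exists_not_in_span[OF \<open>finite (v ` Z)\<close>])
  have "dim (insert (v u) (v ` Z)) < rank_conf v X"
    using dim_insert_not_in_span[OF \<open>finite (v ` Z)\<close> u(2)] assms(3)
    by (simp add: Z_def rank_conf_def)
  moreover have "finite (insert (v u) (v ` Z))"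
    using \<open>finite (v ` Z)\<close> by simp
  ultimately obtain u2 where u2: "u2 \<in> X" "v u2 \<notin> span (insert (v u) (v ` Z))"
    using exists_not_in_span by blast
  have "v u \<notin> span (insert (v u2) (v ` Z))"
    using in_span_insert u(2) u2(2) by blast
  from exists_annihilator_value[OF this]
  obtain \<psi> where \<psi>: "\<psi> \<in> annihilator (insert (v u2) (v ` Z))" "\<psi> (v u) = g (v u)"
    by (rule bexE)
  have "g (v u) \<noteq> 0"
    using u span_base[of "v u" "v ` Z"] by (auto simp: Z_def zero_set_def)
  have "g (v u2) \<noteq> 0"
    using u2 span_base[of "v u2" "insert (v u) (v ` Z)"] by (auto simp: Z_def zero_set_def)
  have "\<psi> (v u2) = 0" "\<forall>i\<in>Z. \<psi> (v i) = 0"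
    using annihilator_vanishes[OF \<psi>(1)] by auto
  moreover have "linear \<psi>"
    using \<psi>(1) by (simp add: annihilator_def)
  moreover have "0 < g (v u) * \<psi> (v u)"
    using \<psi>(2) \<open>g (v u) \<noteq> 0\<close> by (simp add: not_square_less_zero less_le)
  ultimately obtain \<phi> x0 where \<phi>: "linear \<phi>" "\<And>y. \<psi> y = 0 \<Longrightarrow> \<phi> y = g y"
      "covector_le \<phi> g v X" "Z \<subseteq> zero_set \<phi> v X" "x0 \<in> X" "g (v x0) \<noteq> 0" "\<phi> (v x0) = 0"
    using exists_line_search_face[OF assms(1,2), of \<psi> v u] u(1) unfolding Z_def by blast
  have "u2 \<notin> zero_set \<phi> v X"
    using \<phi>(2)[of "v u2"] \<open>\<psi> (v u2) = 0\<close> \<open>g (v u2) \<noteq> 0\<close> by (simp add: zero_set_def)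
  then have "zero_set \<phi> v X \<subset> X"
    using u2(1) by (auto simp: zero_set_def)
  moreover have "v x0 \<notin> span (v ` Z)"
    unfolding Z_def by (rule not_in_span_zero_set[OF assms(2) \<phi>(6)])
  then have "rank_conf v Z < rank_conf v (zero_set \<phi> v X)"
    using \<phi>(4,5,7) assms(1) by (intro rank_conf_less) (auto simp: zero_set_def)
  ultimately show ?thesis
    using that \<phi>(1,3,4) unfolding Z_def by blast
qed

lemma exists_face_rank_Suc:
  fixes v :: "'i \<Rightarrow> 'a::real_vector"
  assumes "finite X" "linear g" "rank_conf v (zero_set g v X) < rank_conf v X"
  shows "\<exists>\<phi>. linear \<phi> \<and> zero_set g v X \<subseteq> zero_set \<phi> v X \<and>
    rank_conf v (zero_set \<phi> v X) = rank_conf v (zero_set g v X) + 1 \<and> covector_le \<phi> g v X"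
  using assms(1,3)
proof (induction "card X" arbitrary: X rule: less_induct)
  case less
  define Z where "Z = zero_set g v X"
  show ?case
  proof (cases "rank_conf v X = rank_conf v Z + 1")
    case True
    have "zero_set (\<lambda>_. 0) v X = X" "Z \<subseteq> X"
      by (auto simp: Z_def zero_set_def)
    then show ?thesis
      using True linear_zero[where 'a='a and 'b=real] unfolding Z_def
      by (intro exI[of _ "\<lambda>_. 0"]) (simp add: covector_le_def)
  next
    case False
    with less.prems(2) have "rank_conf v Z + 2 \<le> rank_conf v X"
      by (simp add: Z_def)
    then obtain \<phi> where \<phi>: "linear \<phi>" "covector_le \<phi> g v X" "Z \<subseteq> zero_set \<phi> v X"
        "zero_set \<phi> v X \<subset> X" "rank_conf v Z < rank_conf v (zero_set \<phi> v X)"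
      using exists_intermediate_face[OF less.prems(1) assms(2)] unfolding Z_def by blast
    define X' where "X' = zero_set \<phi> v X"
    have "zero_set g v X' = Z"
      using \<phi>(3) by (auto simp: X'_def Z_def zero_set_def)
    moreover have "card X' < card X" "finite X'"
      using \<phi>(4) less.prems(1) by (auto simp: X'_def intro: psubset_card_mono finite_subset)
    ultimately obtain \<psi> where \<psi>: "linear \<psi>" "Z \<subseteq> zero_set \<psi> v X'"
        "rank_conf v (zero_set \<psi> v X') = rank_conf v Z + 1" "covector_le \<psi> g v X'"
      using less.hyps[of X'] \<phi>(5) unfolding X'_def by auto
    obtain F where F: "F \<in> annihilator {}" "composes F \<phi> \<psi> v X"
      using exists_composition[OF less.prems(1), of \<phi> "{}" \<psi>] \<phi>(1) \<psi>(1)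
      unfolding annihilator_empty by blast
    have "zero_set F v X = zero_set \<psi> v X'"
      using zero_set_composes[OF F(2)] by (simp add: X'_def)
    moreover have "covector_le F g v X"
      using covector_le_composes[OF F(2) \<phi>(2)] \<psi>(4) by (simp add: X'_def)
    moreover have "linear F"
      using F(1) by (simp add: annihilator_empty)
    ultimately show ?thesis
      using \<psi>(2,3) unfolding Z_def by (intro exI[of _ F]) auto
  qed
qed

lemma exists_face_of_rank:
  fixes v :: "'i \<Rightarrow> 'a::real_vector"
  assumes "finite X" "linear f" "rank_conf v (zero_set f v X) \<le> s" "s \<le> rank_conf v X"
  shows "\<exists>g. linear g \<and> rank_conf v (zero_set g v X) = s \<and> covector_le g f v X"
  using assms(3,4)
proof (induction s)
  case 0
  then show ?case
    using assms(2) covector_le_refl by auto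
next
  case (Suc s)
  show ?case
  proof (cases "rank_conf v (zero_set f v X) = Suc s")
    case True
    then show ?thesis
      using assms(2) covector_le_refl by auto
  next
    case False
    with Suc obtain g where g: "linear g" "rank_conf v (zero_set g v X) = s" "covector_le g f v X"
      by auto
    with Suc.prems(2) obtain \<phi> where \<phi>: "linear \<phi>"
        "rank_conf v (zero_set \<phi> v X) = Suc s" "covector_le \<phi> g v X"
      using exists_face_rank_Suc[OF assms(1) g(1), where v=v] by auto
    then show ?thesis
      using covector_le_trans[OF \<phi>(3) g(3)] by auto
  qed
qed

section \<open>Additivity of the discrepancy at a face\<close>

lemma DD_le_DD_add_DD_quot:
  fixes v :: "'i \<Rightarrow> 'a::real_vector"
  assumes "finite I" "linear f" "sign_sum f v I = DD v I" "linear g" "covector_le g f v I"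
  defines "W \<equiv> zero_set g v I"
  shows "DD v I \<le> DD v W + DD_quot v I W"
proof -
  have "W \<subseteq> I"
    by (auto simp: W_def zero_set_def)
  have "\<bar>sign_sum f v W\<bar> \<le> DD v W"
    using abs_sign_sum_le_DD_modulo[of W f "{}" v] assms(1,2) finite_subset[OF \<open>W \<subseteq> I\<close>]
    by (simp add: DD_eq_DD_modulo annihilator_empty)
  moreover have "sign_sum f v (I - W) = sign_sum g v (I - W)"
    using assms(5) by (intro sign_sum_cong) (auto simp: covector_le_def W_def zero_set_def)
  moreover have "\<bar>sign_sum g v (I - W)\<bar> \<le> DD_quot v I W"
    unfolding DD_quot_eq_DD_modulo W_def
    using assms(1) by (intro abs_sign_sum_le_DD_modulo annihilator_zero_set assms(4)) simp
  ultimately have "real (DD v I) \<le> DD v W + DD_quot v I W"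
    using sign_sum_split[OF assms(1) \<open>W \<subseteq> I\<close>, of f v] assms(3) by (simp add: abs_le_iff)
  then show ?thesis
    by linarith
qed

text \<open>Here \<open>W\<close> must be a flat of the configuration, so that a maximiser for the quotient
  vanishes exactly on \<open>W\<close>; perturbing it towards a maximiser for \<open>W\<close> realises both
  discrepancies at once.\<close>
lemma DD_add_DD_quot_le_DD:
  fixes v :: "'i \<Rightarrow> 'a::real_vector"
  assumes "finite I" "W \<subseteq> I" "\<forall>i\<in>I - W. v i \<notin> span (v ` W)"
  shows "DD v W + DD_quot v I W \<le> DD v I"
proof -
  have "finite W"
    using assms(1,2) finite_subset by blast
  obtain h where h: "h \<in> annihilator {}" "sign_sum h v W = DD v W"
    using DD_modulo_attained[OF \<open>finite W\<close>] by (auto simp: DD_eq_DD_modulo)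
  obtain q where q: "q \<in> annihilator (v ` W)" "sign_sum q v (I - W) = DD_quot v I W"
      "\<forall>i\<in>I - W. v i \<notin> span (v ` W) \<longrightarrow> q (v i) \<noteq> 0"
    using DD_modulo_attained_generic[of "I - W" "v ` W" v] assms(1)
    by (auto simp: DD_quot_eq_DD_modulo)
  have "zero_set q v I = W"
    using annihilator_vanishes[OF q(1)] q(3) assms(2,3) by (auto simp: zero_set_def)
  have "sign_sum q v W = 0"
    using annihilator_vanishes[OF q(1)] by (simp add: sign_sum_def)
  have "q \<in> annihilator {}"
    unfolding annihilator_empty using q(1) by (simp add: annihilator_def)
  then obtain F where F: "F \<in> annihilator {}" "composes F q h v I"
    using exists_composition[OF assms(1) _ h(1)] by blast
  have "sign_sum F v I = DD v W + DD_quot v I W"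
    using sign_sum_composes[OF assms(1) F(2)] sign_sum_split[OF assms(1,2), of q v]
      \<open>zero_set q v I = W\<close> \<open>sign_sum q v W = 0\<close> h(2) q(2) by simp
  moreover have "\<bar>sign_sum F v I\<bar> \<le> DD v I"
    using abs_sign_sum_le_DD_modulo[OF assms(1) F(1)] by (simp add: DD_eq_DD_modulo)
  ultimately show ?thesis
    by linarith
qed

lemma DD_additive_at_face:
  fixes v :: "'i \<Rightarrow> 'a::real_vector"
  assumes "finite I" "linear f" "sign_sum f v I = DD v I" "linear g" "covector_le g f v I"
  defines "W \<equiv> zero_set g v I"
  shows "DD v I = DD v W + DD_quot v I W"
proof -
  have "W \<subseteq> I"
    by (auto simp: W_def zero_set_def)
  moreover have "v i \<notin> span (v ` W)" if "i \<in> I - W" for i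
    using that not_in_span_zero_set[OF assms(4), of "v i" v I] by (simp add: W_def zero_set_def)
  ultimately have "DD v W + DD_quot v I W \<le> DD v I"
    using DD_add_DD_quot_le_DD[OF assms(1)] by blast
  with DD_le_DD_add_DD_quot[OF assms(1-5)] show ?thesis
    unfolding W_def by linarith
qed

theorem mainTheorem13:
  fixes v :: "'i \<Rightarrow> 'a::real_vector" and I :: "'i set" and r s :: nat
  assumes "finite I"
    and "rank_conf v I = r"
    and "1 \<le> s" and "s \<le> r - 1"
  shows "\<exists>J\<subseteq>I. rank_conf v J = s \<and> DD v I = DD v J + DD_quot v I J"
proof -
  obtain f where f: "f \<in> annihilator {}" "sign_sum f v I = DD v I"
      "\<forall>i\<in>I. v i \<noteq> 0 \<longrightarrow> f (v i) \<noteq> 0"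
    using DD_modulo_attained_generic[OF assms(1), of "{}" v] by (auto simp: DD_eq_DD_modulo)
  then have "linear f"
    by (simp add: annihilator_empty)
  have "rank_conf v (zero_set f v I) \<le> s" "s \<le> rank_conf v I"
    using rank_conf_zero_set_eq_0[OF f(3)] assms(2-4) by linarith+
  then obtain g where g: "linear g" "rank_conf v (zero_set g v I) = s" "covector_le g f v I"
    using exists_face_of_rank[OF assms(1) \<open>linear f\<close>, where v=v and s=s] by auto
  have "zero_set g v I \<subseteq> I"
    by (auto simp: zero_set_def)
  with g DD_additive_at_face[OF assms(1) \<open>linear f\<close> f(2) g(1,3)] show ?thesis
    by blast
qed

end
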